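(* Let $W_{kj}$, $k\in[N]$, $j\in[p]$, be i.i.d. $N(0,1)$ random variables and $Z=\min_{k\in[N]}\max_{j\in[p]}W_{kj}$, with probability density function $f_Z$. Provided that $p/\sqrt{2\pi}>\log(Np)\ge2$, $$\text{(i)}\quad \max_{t\in\mathbb{R}}f_Z(t)\le2\{\sqrt2+2\}\log^{3/2}(Np),$$ $$\text{(ii)}\quad \max_{t\in\mathbb{R}}f_Z(t)\ge\Big\{\sqrt2\log^{1/2}\Big(\frac{p}{\sqrt{2\pi}\log N}\Big)-2\Big\}\frac{\log N}{e}.$$
   Context: $\log$ denotes the natural logarithm; $[N]=\{1,\dots,N\}$. *)

theory Defs
  imports "HOL-Probability.Probability"
begin

end

theory Submission
  imports Defs "HOL-Real_Asymp.Real_Asymp"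
begin

(*
  Independence gives P(Z <= t) = 1 - (1 - Phi(t)^p)^N, so with u = Phi(t)^p
  f_Z(t) = N u (1 - u)^(N-1) * p phi(t) / Phi(t).

  Upper bound: for t <= 0 the density is at most N p / 2^p <= 1, and for t^2 >= 2 log(Np)
  already N p phi(t) <= 1.  For 0 <= t < sqrt(2 log(Np)) the Mills bound
  1 - Phi(t) >= phi(t)/(t+1) gives u <= exp(-y) with y = p phi(t)/(t+1), hence
  N u (1-u)^(N-1) <= min(1, N exp(-y)), and y min(1, N exp(-y)) <= log(Np) because
  y exp(-y) is decreasing for y >= 1; so f_Z(t) <= 2 log(Np) (t+1).

  Lower bound: evaluate at the quantile t with Phi(t)^p = 1/N.  There
  f_Z(t) = (1 - 1/N)^(N-1) p phi(t)/Phi(t) >= e^(-1) t log N, using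
  log N <= p (1 - Phi(t))/Phi(t) and the other Mills bound t (1 - Phi(t)) <= phi(t).
  Conversely p (1 - Phi(t)) <= log N = p phi(s) for s = sqrt(2 log(p/(sqrt(2 pi) log N))),
  and comparing with the Mills bound at s - 2 forces t >= s - 2.
*)

definition density_cdf :: "(real \<Rightarrow> real) \<Rightarrow> real \<Rightarrow> real" where
  "density_cdf g t = (\<integral>x. indicator {..t} x * g x \<partial>lborel)"

lemma density_cdf_add_interval_integral:
  fixes g :: "real \<Rightarrow> real"
  assumes g: "integrable lborel g" and "a \<le> x"
  shows "density_cdf g x = density_cdf g a + (LBINT y=a..x. g y)"
proof -
  have "(LBINT y=a..x. g y) = (\<integral>y. indicator {a<..x} y * g y \<partial>lborel)"
    using \<open>a \<le> x\<close> by (simp add: interval_integral_Ioc set_lebesgue_integral_def)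
  moreover have "indicator {..x} y * g y = indicator {..a} y * g y + indicator {a<..x} y * g y" for y
    using \<open>a \<le> x\<close> by (auto simp: indicator_def)
  moreover have "integrable lborel (\<lambda>y. indicator A y * g y)" if "A \<in> sets borel" for A
    using integrable_mult_indicator[OF _ g] that by simp
  ultimately show ?thesis
    unfolding density_cdf_def by (simp add: Bochner_Integration.integral_add)
qed

lemma has_real_derivative_density_cdf:
  fixes g :: "real \<Rightarrow> real"
  assumes "continuous_on UNIV g" and g: "integrable lborel g"
  shows "(density_cdf g has_real_derivative g t) (at t)"
proof -
  have "((\<lambda>u. LBINT y=t-1..u. g y) has_vector_derivative g t) (at t within {t-1..t+1})"
    by (rule interval_integral_FTC2) (auto intro: continuous_on_subset[OF assms(1)])
  then have "((\<lambda>u. density_cdf g (t-1) + (LBINT y=t-1..u. g y)) has_vector_derivative g t)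
      (at t within {t-1..t+1})"
    by (auto intro!: derivative_eq_intros)
  then have "(density_cdf g has_vector_derivative g t) (at t within {t-1..t+1})"
    by (rule has_vector_derivative_weaken) (auto simp: density_cdf_add_interval_integral[OF g])
  then show ?thesis
    by (simp add: at_within_Icc_at has_real_derivative_iff_has_vector_derivative)
qed

lemma distributed_measure_le_eq_density_cdf:
  fixes X :: "'a \<Rightarrow> real"
  assumes D: "distributed M lborel X (\<lambda>x. ennreal (g x))" and "\<And>x. 0 \<le> g x"
  shows "measure M {\<omega>\<in>space M. X \<omega> \<le> t} = density_cdf g t"
proof -
  have "density_cdf g t = (\<integral>x. g x * indicator {..t} x \<partial>lborel)"
    by (simp add: density_cdf_def mult.commute)
  also have "\<dots> = (\<integral>\<omega>. indicator {..t} (X \<omega>) \<partial>M)"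
    by (rule distributed_integral[OF D]) (auto simp: assms(2))
  also have "\<dots> = (\<integral>\<omega>. indicator {\<omega>\<in>space M. X \<omega> \<le> t} \<omega> \<partial>M)"
    by (intro Bochner_Integration.integral_cong) (auto simp: indicator_def)
  finally show ?thesis
    by (simp add: Int_absorb2 subsetI)
qed

lemma (in prob_space) distributed_integrable_density:
  assumes D: "distributed M lborel X (\<lambda>x. ennreal (g x))" and "\<And>x. 0 \<le> g x"
  shows "integrable lborel g"
  using distributed_integrable[OF D, of "\<lambda>_. 1"] assms(2) by simp

abbreviation phi :: "real \<Rightarrow> real" where
  "phi \<equiv> std_normal_density"

definition Phi :: "real \<Rightarrow> real" where
  "Phi = density_cdf phi"

lemma phi_has_real_derivative: "(phi has_real_derivative - y * phi y) (at y)"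
  unfolding std_normal_density_def
  by (auto intro!: derivative_eq_intros simp: power2_eq_square field_simps)

lemma phi_pos: "0 < phi y"
  by (simp add: normal_density_pos)

lemma phi_le_half: "phi y \<le> 1 / 2"
proof -
  have "2 \<le> sqrt (2 * pi)"
    using pi_ge_two real_sqrt_le_mono[of 4 "2 * pi"] by simp
  moreover have "exp (- y\<^sup>2 / 2) \<le> 1"
    by simp
  ultimately have "exp (- y\<^sup>2 / 2) / sqrt (2 * pi) \<le> 1 / 2"
    by (intro frac_le) auto
  then show ?thesis
    by (simp add: std_normal_density_def)
qed

lemma Phi_has_real_derivative: "(Phi has_real_derivative phi t) (at t)"
  unfolding Phi_def
  by (rule has_real_derivative_density_cdf)
    (auto simp: normal_density_def intro!: continuous_intros)

lemma continuous_on_Phi: "continuous_on UNIV Phi"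
  using Phi_has_real_derivative
  by (intro continuous_at_imp_continuous_on ballI DERIV_isCont) auto

lemma integrable_indicator_phi: "A \<in> sets borel \<Longrightarrow> integrable lborel (\<lambda>x. indicator A x * phi x)"
  using integrable_mult_indicator[of A lborel phi] by simp

lemma Phi_nonneg: "0 \<le> Phi t"
  unfolding Phi_def density_cdf_def by (intro integral_nonneg_AE) auto

lemma Phi_mono: "s \<le> t \<Longrightarrow> Phi s \<le> Phi t"
  unfolding Phi_def density_cdf_def
  by (intro integral_mono integrable_indicator_phi) (auto simp: indicator_def)

lemma Phi_le_1: "Phi t \<le> 1"
proof -
  have "Phi t \<le> (\<integral>x. phi x \<partial>lborel)"
    unfolding Phi_def density_cdf_def
    by (intro integral_mono integrable_indicator_phi) (auto simp: indicator_def)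
  then show ?thesis by simp
qed

lemma tendsto_Phi_at_top: "(Phi \<longlongrightarrow> 1) at_top"
  using tendsto_integral_at_top[of lborel phi] unfolding Phi_def density_cdf_def by simp

lemma Phi_0: "Phi 0 = 1 / 2"
proof -
  have "(\<integral>x. indicator {0<..} x * phi x \<partial>lborel) = (\<integral>x. indicator {0<..} (-x) * phi (-x) \<partial>lborel)"
    using lborel_integral_real_affine[of "-1" "\<lambda>x. indicator {0<..} x * phi x" 0] by simp
  also have "\<dots> = Phi 0"
    unfolding Phi_def density_cdf_def
    by (intro integral_cong_AE eventually_mono[OF AE_lborel_singleton[of 0]])
      (auto simp: normal_density_def indicator_def)
  finally have upper_half: "(\<integral>x. indicator {0<..} x * phi x \<partial>lborel) = Phi 0" .
  have "1 = (\<integral>x. phi x \<partial>lborel)"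
    by simp
  also have "\<dots> = (\<integral>x. indicator {..0} x * phi x + indicator {0<..} x * phi x \<partial>lborel)"
    by (rule Bochner_Integration.integral_cong) (auto simp: indicator_def)
  also have "\<dots> = Phi 0 + Phi 0"
    using upper_half
    by (subst Bochner_Integration.integral_add) (auto intro!: integrable_indicator_phi simp: Phi_def density_cdf_def)
  finally show ?thesis by simp
qed

lemma DERIV_nonpos_tendsto_0_imp_nonneg:
  fixes g g' :: "real \<Rightarrow> real"
  assumes "\<And>y. a \<le> y \<Longrightarrow> (g has_real_derivative g' y) (at y)"
    and "\<And>y. a \<le> y \<Longrightarrow> g' y \<le> 0"
    and "(g \<longlongrightarrow> 0) at_top"
  shows "0 \<le> g a"
proof -
  have "g b \<le> g a" if "a \<le> b" for b
  proof (rule DERIV_nonpos_imp_decreasing_open[OF that])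
    show "\<exists>y. DERIV g x :> y \<and> y \<le> 0" if "a < x" "x < b" for x
      using assms(1,2)[of x] that by auto
    show "continuous_on {a..b} g"
      using assms(1) by (intro continuous_at_imp_continuous_on ballI DERIV_isCont) auto
  qed
  then have "eventually (\<lambda>b. g b \<le> g a) at_top"
    by (auto simp: eventually_at_top_linorder)
  then show ?thesis
    using tendsto_upperbound[OF assms(3)] by auto
qed

lemma Phi_tail_ge:
  assumes "0 \<le> x"
  shows "phi x / (x + 1) \<le> 1 - Phi x"
proof -
  let ?g = "\<lambda>y. 1 - Phi y - phi y / (y + 1)"
  have "0 \<le> ?g x"
  proof (rule DERIV_nonpos_tendsto_0_imp_nonneg[where g = ?g])
    fix y assume "x \<le> y"
    with assms have "y + 1 \<noteq> 0" by auto
    have "(?g has_real_derivative - phi y - (- y * phi y * (y + 1) - phi y) / (y + 1)\<^sup>2) (at y)"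
      using \<open>y + 1 \<noteq> 0\<close>
      by (auto intro!: derivative_eq_intros Phi_has_real_derivative phi_has_real_derivative
          simp: power2_eq_square)
    moreover have "- phi y - (- y * phi y * (y + 1) - phi y) / (y + 1)\<^sup>2 = - y * phi y / (y + 1)\<^sup>2"
      using \<open>y + 1 \<noteq> 0\<close> by (simp add: divide_simps) (simp add: algebra_simps power2_eq_square)
    ultimately show "(?g has_real_derivative - y * phi y / (y + 1)\<^sup>2) (at y)"
      by simp
    show "- y * phi y / (y + 1)\<^sup>2 \<le> 0"
      using \<open>x \<le> y\<close> assms phi_pos[of y] by (simp add: divide_nonpos_pos)
  next
    have "((\<lambda>y. phi y / (y + 1)) \<longlongrightarrow> 0) at_top"
      unfolding std_normal_density_def by real_asymp
    from tendsto_diff[OF tendsto_diff[OF tendsto_const[of "1::real"] tendsto_Phi_at_top] this]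
    show "(?g \<longlongrightarrow> 0) at_top"
      by simp
  qed
  then show ?thesis by simp
qed

lemma Phi_tail_le:
  assumes "0 \<le> x"
  shows "x * (1 - Phi x) \<le> phi x"
proof (cases "x = 0")
  case True
  then show ?thesis using phi_pos[of 0] by simp
next
  case False
  with assms have "0 < x" by simp
  let ?g = "\<lambda>y. phi y / y - (1 - Phi y)"
  have "0 \<le> ?g x"
  proof (rule DERIV_nonpos_tendsto_0_imp_nonneg[where g = ?g])
    fix y assume "x \<le> y"
    with \<open>0 < x\<close> have "y \<noteq> 0" by auto
    then show "(?g has_real_derivative - phi y / y\<^sup>2) (at y)"
      by (auto intro!: derivative_eq_intros Phi_has_real_derivative phi_has_real_derivative
          simp: field_simps power2_eq_square)
    show "- phi y / y\<^sup>2 \<le> 0"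
      using phi_pos[of y] by (simp add: divide_nonpos_pos)
  next
    have "((\<lambda>y. phi y / y) \<longlongrightarrow> 0) at_top"
      unfolding std_normal_density_def by real_asymp
    from tendsto_diff[OF this tendsto_diff[OF tendsto_const[of "1::real"] tendsto_Phi_at_top]]
    show "(?g \<longlongrightarrow> 0) at_top"
      by simp
  qed
  then show ?thesis using \<open>0 < x\<close> by (simp add: field_simps)
qed

lemma (in prob_space) indep_vars_row_Max:
  fixes X :: "'k \<times> 'j \<Rightarrow> 'a \<Rightarrow> real"
  assumes ind: "indep_vars (\<lambda>_. borel) X (K \<times> J)" and "finite J"
  shows "indep_vars (\<lambda>_. borel) (\<lambda>k \<omega>. Max ((\<lambda>j. X (k, j) \<omega>) ` J)) K"
proof -
  let ?row = "\<lambda>k \<omega>. restrict (\<lambda>i. X i \<omega>) ({k} \<times> J)"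
  have "indep_vars (\<lambda>k. PiM ({k} \<times> J) (\<lambda>_. borel)) ?row K"
    by (rule indep_vars_restrict[OF ind]) (auto simp: disjoint_family_on_def)
  then have "indep_vars (\<lambda>_. borel) (\<lambda>k \<omega>. Max ((\<lambda>j. ?row k \<omega> (k, j)) ` J)) K"
  proof (rule indep_vars_compose2[where Y = "\<lambda>k g. Max ((\<lambda>j. g (k, j)) ` J)"])
    fix k
    show "(\<lambda>g. Max ((\<lambda>j. g (k, j)) ` J)) \<in> borel_measurable (PiM ({k} \<times> J) (\<lambda>_. borel :: real measure))"
      using \<open>finite J\<close> by measurable
  qed
  then show ?thesis
    by simp
qed

lemma (in prob_space) prob_Max_le_eq_prod:
  fixes X :: "'i \<Rightarrow> 'a \<Rightarrow> real"
  assumes ind: "indep_vars (\<lambda>_. borel) X I" and "finite I" "I \<noteq> {}"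
  shows "prob {\<omega>\<in>space M. Max ((\<lambda>i. X i \<omega>) ` I) \<le> t} = (\<Prod>i\<in>I. prob {\<omega>\<in>space M. X i \<omega> \<le> t})"
proof -
  have "{\<omega>\<in>space M. Max ((\<lambda>i. X i \<omega>) ` I) \<le> t} = (\<Inter>i\<in>I. X i -` {..t} \<inter> space M)"
    using assms(2,3) by auto
  also have "prob \<dots> = (\<Prod>i\<in>I. prob (X i -` {..t} \<inter> space M))"
    using assms by (intro indep_varsD[OF ind]) auto
  finally show ?thesis
    by (simp add: vimage_def Int_def conj_commute)
qed

lemma (in prob_space) prob_Min_gt_eq_prod:
  fixes X :: "'i \<Rightarrow> 'a \<Rightarrow> real"
  assumes ind: "indep_vars (\<lambda>_. borel) X I" and "finite I" "I \<noteq> {}"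
  shows "prob {\<omega>\<in>space M. t < Min ((\<lambda>i. X i \<omega>) ` I)} = (\<Prod>i\<in>I. prob {\<omega>\<in>space M. t < X i \<omega>})"
proof -
  have "{\<omega>\<in>space M. t < Min ((\<lambda>i. X i \<omega>) ` I)} = (\<Inter>i\<in>I. X i -` {t<..} \<inter> space M)"
    using assms(2,3) by auto
  also have "prob \<dots> = (\<Prod>i\<in>I. prob (X i -` {t<..} \<inter> space M))"
    using assms by (intro indep_varsD[OF ind]) auto
  finally show ?thesis
    by (simp add: vimage_def Int_def conj_commute)
qed

lemma (in prob_space) prob_gt_eq_1_minus_prob_le:
  fixes X :: "'a \<Rightarrow> real"
  assumes "random_variable borel X"
  shows "prob {\<omega>\<in>space M. t < X \<omega>} = 1 - prob {\<omega>\<in>space M. X \<omega> \<le> t}"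
proof -
  have "{\<omega>\<in>space M. t < X \<omega>} = space M - {\<omega>\<in>space M. X \<omega> \<le> t}"
    by auto
  then show ?thesis
    using prob_compl[of "{\<omega>\<in>space M. X \<omega> \<le> t}"] assms by simp
qed

lemma (in prob_space) prob_Min_Max_le:
  fixes X :: "'k \<times> 'j \<Rightarrow> 'a \<Rightarrow> real"
  assumes ind: "indep_vars (\<lambda>_. borel) X (K \<times> J)"
    and K: "finite K" "K \<noteq> {}" and J: "finite J" "J \<noteq> {}"
    and q: "\<And>i. i \<in> K \<times> J \<Longrightarrow> prob {\<omega>\<in>space M. X i \<omega> \<le> t} = q"
  shows "prob {\<omega>\<in>space M. Min ((\<lambda>k. Max ((\<lambda>j. X (k, j) \<omega>) ` J)) ` K) \<le> t}
    = 1 - (1 - q ^ card J) ^ card K"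
proof -
  define R where "R k \<omega> = Max ((\<lambda>j. X (k, j) \<omega>) ` J)" for k \<omega>
  have ind_R: "indep_vars (\<lambda>_. borel) R K"
    unfolding R_def using ind \<open>finite J\<close> by (rule indep_vars_row_Max)
  then have rv_R: "random_variable borel (R k)" if "k \<in> K" for k
    using that by (simp add: indep_vars_def)
  have "prob {\<omega>\<in>space M. R k \<omega> \<le> t} = q ^ card J" if "k \<in> K" for k
  proof -
    have "(\<lambda>i. X i \<omega>) ` ({k} \<times> J) = (\<lambda>j. X (k, j) \<omega>) ` J" for \<omega>
      by force
    moreover have "{k} \<times> J \<subseteq> K \<times> J"
      using that by auto
    ultimately have "prob {\<omega>\<in>space M. R k \<omega> \<le> t} = (\<Prod>i\<in>{k} \<times> J. prob {\<omega>\<in>space M. X i \<omega> \<le> t})"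
      using prob_Max_le_eq_prod[OF indep_vars_subset[OF ind], of "{k} \<times> J" t] J
      by (simp add: R_def)
    also have "\<dots> = (\<Prod>i\<in>{k} \<times> J. q)"
      using that q by (intro prod.cong) auto
    finally show ?thesis
      by (simp add: card_cartesian_product)
  qed
  then have "prob {\<omega>\<in>space M. t < Min ((\<lambda>k. R k \<omega>) ` K)} = (\<Prod>k\<in>K. 1 - q ^ card J)"
    unfolding prob_Min_gt_eq_prod[OF ind_R K] by (simp add: prob_gt_eq_1_minus_prob_le rv_R)
  moreover have "random_variable borel (\<lambda>\<omega>. Min ((\<lambda>k. R k \<omega>) ` K))"
    using rv_R K by (intro borel_measurable_Min) auto
  ultimately show ?thesis
    using prob_gt_eq_1_minus_prob_le[of "\<lambda>\<omega>. Min ((\<lambda>k. R k \<omega>) ` K)" t] by (simp add: R_def)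
qed

definition minmax_density :: "nat \<Rightarrow> nat \<Rightarrow> real \<Rightarrow> real" where
  "minmax_density N p t = real N * (1 - Phi t ^ p) ^ (N - 1) * (real p * Phi t ^ (p - 1) * phi t)"

lemma has_real_derivative_minmax_cdf:
  "((\<lambda>t. 1 - (1 - Phi t ^ p) ^ N) has_real_derivative minmax_density N p t) (at t)"
  unfolding minmax_density_def
  by (auto intro!: derivative_eq_intros Phi_has_real_derivative simp: algebra_simps)

lemma Phi_power_bounds: "0 \<le> Phi t ^ p" "Phi t ^ p \<le> 1"
  using Phi_nonneg Phi_le_1 by (simp_all add: power_le_one)

lemma minmax_density_nonneg: "0 \<le> minmax_density N p t"
  using Phi_power_bounds Phi_nonneg[of t] by (simp add: minmax_density_def)

lemma minmax_density_le_Np_phi: "minmax_density N p t \<le> real N * real p * phi t"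
proof -
  have "(1 - Phi t ^ p) ^ (N - 1) * Phi t ^ (p - 1) \<le> 1 * 1"
    using Phi_power_bounds Phi_nonneg Phi_le_1
    by (intro mult_mono power_le_one) auto
  then have "real N * real p * phi t * ((1 - Phi t ^ p) ^ (N - 1) * Phi t ^ (p - 1))
      \<le> real N * real p * phi t * 1"
    by (intro mult_left_mono) auto
  then show ?thesis
    by (simp add: minmax_density_def algebra_simps)
qed

lemma minmax_density_le_of_nonpos:
  assumes "t \<le> 0" and "1 \<le> p"
  shows "minmax_density N p t \<le> real N * real p / 2 ^ p"
proof -
  have "Phi t \<le> 1 / 2"
    using Phi_mono[OF \<open>t \<le> 0\<close>] by (simp add: Phi_0)
  have "(1 - Phi t ^ p) ^ (N - 1) \<le> 1"
    using Phi_power_bounds by (intro power_le_one) auto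
  then have "minmax_density N p t \<le> real N * 1 * (real p * Phi t ^ (p - 1) * phi t)"
    unfolding minmax_density_def using Phi_nonneg[of t]
    by (intro mult_right_mono mult_left_mono) auto
  also have "\<dots> \<le> real N * (real p * (1 / 2) ^ (p - 1) * (1 / 2))"
    using \<open>Phi t \<le> 1 / 2\<close> Phi_nonneg phi_le_half
    by (intro mult_left_mono mult_mono power_mono) auto
  also have "\<dots> = real N * real p / 2 ^ p"
    using \<open>1 \<le> p\<close> by (cases p) (auto simp: field_simps)
  finally show ?thesis .
qed

lemma mult_phi_le_1:
  assumes "0 < c" and "2 * ln c \<le> t\<^sup>2"
  shows "c * phi t \<le> 1"
proof -
  have "phi t \<le> exp (- t\<^sup>2 / 2)"
    using pi_ge_two by (simp add: std_normal_density_def field_simps)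
  also have "\<dots> \<le> exp (- ln c)"
    using assms(2) by simp
  also have "\<dots> = 1 / c"
    using assms(1) by (simp add: exp_minus divide_inverse)
  finally show ?thesis
    using assms(1) by (simp add: field_simps)
qed

lemma power_one_minus_mult_one_plus_le_1:
  fixes u :: real
  assumes "0 \<le> u" "u \<le> 1"
  shows "(1 - u) ^ n * (1 + real n * u) \<le> 1"
proof (induction n)
  case 0
  show ?case by simp
next
  case (Suc n)
  have "(1 - u) * (1 + (real n + 1) * u) = 1 + real n * u - (real n + 1) * u\<^sup>2"
    by (simp add: algebra_simps power2_eq_square)
  also have "\<dots> \<le> 1 + real n * u"
    by simp
  finally have "(1 - u) ^ n * ((1 - u) * (1 + (real n + 1) * u)) \<le> (1 - u) ^ n * (1 + real n * u)"
    using assms by (intro mult_left_mono) auto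
  also have "\<dots> \<le> 1"
    by (rule Suc.IH)
  finally show ?case
    by (simp add: algebra_simps)
qed

lemma mult_power_one_minus_le_1:
  fixes u :: real
  assumes "0 \<le> u" "u \<le> 1" and "1 \<le> N"
  shows "real N * u * (1 - u) ^ (N - 1) \<le> 1"
proof -
  have "real N * u \<le> 1 + real (N - 1) * u"
    using assms by (simp add: of_nat_diff algebra_simps)
  then have "real N * u * (1 - u) ^ (N - 1) \<le> (1 + real (N - 1) * u) * (1 - u) ^ (N - 1)"
    using assms by (intro mult_right_mono) auto
  also have "\<dots> = (1 - u) ^ (N - 1) * (1 + real (N - 1) * u)"
    by (rule mult.commute)
  also have "\<dots> \<le> 1"
    using power_one_minus_mult_one_plus_le_1[OF assms(1,2)] .
  finally show ?thesis .
qed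

lemma mult_min_1_exp_le:
  fixes y c M :: real
  assumes "0 \<le> y" "1 \<le> M" "0 \<le> c" "c \<le> exp M"
  shows "y * min 1 (c * exp (- y)) \<le> M"
proof (cases "y \<le> M")
  case True
  have "y * min 1 (c * exp (- y)) \<le> y * 1"
    using assms(1) by (intro mult_left_mono) auto
  with True show ?thesis
    by simp
next
  case False
  have "y \<le> M * (1 + (y - M))"
    using False assms(2) mult_right_mono[of 1 M "y - M"] by (simp add: algebra_simps)
  also have "\<dots> \<le> M * exp (y - M)"
    using assms(2) by (intro mult_left_mono) (auto simp: add.commute)
  finally have "y * exp (- y) \<le> M * exp (y - M) * exp (- y)"
    by (intro mult_right_mono) auto
  then have "y * exp (- y) \<le> M * exp (- M)"
    by (simp add: mult.assoc flip: exp_add)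
  have "y * min 1 (c * exp (- y)) \<le> y * (c * exp (- y))"
    using assms(1) by (intro mult_left_mono) auto
  also have "\<dots> = c * (y * exp (- y))"
    by (simp add: algebra_simps)
  also have "\<dots> \<le> c * (M * exp (- M))"
    using \<open>y * exp (- y) \<le> M * exp (- M)\<close> assms(3) by (rule mult_left_mono)
  also have "\<dots> \<le> exp M * (M * exp (- M))"
    using assms(2,4) by (intro mult_right_mono) auto
  also have "\<dots> = M"
    by (simp add: exp_minus)
  finally show ?thesis .
qed

lemma minmax_density_le_of_nonneg:
  assumes "0 \<le> t" and "1 \<le> N" "1 \<le> p" and "1 \<le> L" "real N \<le> exp L"
  shows "minmax_density N p t \<le> 2 * L * (t + 1)"
proof -
  define F where "F = Phi t"
  define u where "u = F ^ p"
  define y where "y = real p * phi t / (t + 1)"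
  have "1 / 2 \<le> F"
    using Phi_mono[OF \<open>0 \<le> t\<close>] by (simp add: F_def Phi_0)
  have u: "0 \<le> u" "u \<le> 1"
    using Phi_power_bounds by (simp_all add: u_def F_def)
  have "y \<le> real p * (1 - F)"
    using mult_left_mono[OF Phi_tail_ge[OF \<open>0 \<le> t\<close>], of "real p"]
    by (simp add: y_def F_def)
  have "u \<le> exp (- (1 - F)) ^ p"
    unfolding u_def using \<open>1 / 2 \<le> F\<close> exp_ge_add_one_self[of "- (1 - F)"]
    by (intro power_mono) auto
  also have "\<dots> \<le> exp (- y)"
    using \<open>y \<le> real p * (1 - F)\<close> by (simp add: algebra_simps flip: exp_of_nat_mult)
  finally have "u \<le> exp (- y)" .
  have "real N * u * (1 - u) ^ (N - 1) \<le> real N * u * 1"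
    using u by (intro mult_left_mono power_le_one) auto
  also have "\<dots> \<le> real N * exp (- y)"
    using \<open>u \<le> exp (- y)\<close> by (simp add: mult_left_mono)
  finally have factor1: "real N * u * (1 - u) ^ (N - 1) \<le> min 1 (real N * exp (- y))"
    using mult_power_one_minus_le_1[OF u \<open>1 \<le> N\<close>] by simp
  have "real p * phi t / F \<le> real p * phi t / (1 / 2)"
    using \<open>1 / 2 \<le> F\<close> by (intro divide_left_mono) auto
  also have "\<dots> = 2 * ((t + 1) * y)"
    using \<open>0 \<le> t\<close> by (simp add: y_def)
  finally have factor2: "real p * phi t / F \<le> 2 * ((t + 1) * y)" .
  have "minmax_density N p t = real N * u * (1 - u) ^ (N - 1) * (real p * phi t / F)"
    using \<open>1 \<le> p\<close> \<open>1 / 2 \<le> F\<close>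
    by (cases p) (auto simp: minmax_density_def u_def F_def field_simps)
  also have "\<dots> \<le> min 1 (real N * exp (- y)) * (2 * ((t + 1) * y))"
    using \<open>1 / 2 \<le> F\<close> by (intro mult_mono[OF factor1 factor2]) auto
  also have "\<dots> = 2 * (t + 1) * (y * min 1 (real N * exp (- y)))"
    by (simp add: algebra_simps)
  also have "\<dots> \<le> 2 * (t + 1) * L"
    using assms by (intro mult_left_mono mult_min_1_exp_le) (auto simp: y_def)
  finally show ?thesis
    by (simp add: algebra_simps)
qed

lemma Np_le_two_power:
  assumes "1 \<le> N" "1 \<le> p" and "ln (real N * real p) < real p / sqrt (2 * pi)"
  shows "real N * real p \<le> 2 ^ p"
proof -
  have "2 \<le> sqrt (2 * pi)"
    using pi_ge_two real_sqrt_le_mono[of 4 "2 * pi"] by simp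
  moreover have "0 \<le> ln (real N * real p)"
    using assms(1,2) mult_mono[of 1 "real N" 1 "real p"] by simp
  ultimately have "ln (real N * real p) * 2 \<le> ln (real N * real p) * sqrt (2 * pi)"
    by (intro mult_left_mono)
  with assms(3) have "ln (real N * real p) \<le> ln (exp (1 / 2) ^ p)"
    by (simp add: field_simps flip: exp_of_nat_mult)
  then have "real N * real p \<le> exp (1 / 2) ^ p"
    using assms(1,2) by (subst (asm) ln_le_cancel_iff) auto
  also have "\<dots> \<le> 2 ^ p"
  proof (intro power_mono)
    have "exp (1 / 2 :: real) ^ 2 = exp 1"
      by (simp flip: exp_of_nat_mult)
    also have "\<dots> \<le> 2 ^ 2"
      using exp_le by simp
    finally show "exp (1 / 2 :: real) \<le> 2"
      by (rule power2_le_imp_le) simp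
  qed simp
  finally show ?thesis .
qed

lemma two_mult_sqrt_plus_1_le_powr:
  fixes L :: real
  assumes "2 \<le> L"
  shows "2 * L * (sqrt (2 * L) + 1) \<le> 2 * (sqrt 2 + 2) * L powr (3/2)"
proof -
  have "1 \<le> sqrt L"
    using assms by simp
  then have "L \<le> L * sqrt L"
    using assms mult_left_mono[of 1 "sqrt L" L] by simp
  have "2 * L * (sqrt (2 * L) + 1) = 2 * sqrt 2 * (L * sqrt L) + 2 * L"
    by (simp add: real_sqrt_mult algebra_simps)
  also have "\<dots> \<le> 2 * sqrt 2 * (L * sqrt L) + 4 * (L * sqrt L)"
    using \<open>L \<le> L * sqrt L\<close> assms by linarith
  also have "\<dots> = 2 * (sqrt 2 + 2) * (L powr 1 * L powr (1/2))"
    using assms by (simp add: powr_half_sqrt algebra_simps)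
  also have "\<dots> = 2 * (sqrt 2 + 2) * L powr (3/2)"
    using powr_add[of L 1 "1/2"] by simp
  finally show ?thesis .
qed

lemma minmax_density_le:
  assumes "1 \<le> N" "1 \<le> p"
    and "ln (real N * real p) < real p / sqrt (2 * pi)" and "2 \<le> ln (real N * real p)"
  shows "minmax_density N p t \<le> 2 * (sqrt 2 + 2) * ln (real N * real p) powr (3/2)"
proof -
  define L where "L = ln (real N * real p)"
  have "0 < real N * real p" and "2 \<le> L"
    using assms by (simp_all add: L_def)
  have "2 * L * 1 \<le> 2 * L * (sqrt (2 * L) + 1)"
    using \<open>2 \<le> L\<close> by (intro mult_left_mono) auto
  then have "1 \<le> 2 * L * (sqrt (2 * L) + 1)"
    using \<open>2 \<le> L\<close> by linarith
  consider "t < 0" | "0 \<le> t" "2 * L \<le> t\<^sup>2" | "0 \<le> t" "t\<^sup>2 < 2 * L"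
    by fastforce
  then have "minmax_density N p t \<le> 2 * L * (sqrt (2 * L) + 1)"
  proof cases
    case 1
    then have "minmax_density N p t \<le> real N * real p / 2 ^ p"
      using assms(2) by (intro minmax_density_le_of_nonpos) auto
    also have "\<dots> \<le> 1"
      using Np_le_two_power[OF assms(1-3)] by simp
    finally show ?thesis
      using \<open>1 \<le> 2 * L * (sqrt (2 * L) + 1)\<close> by linarith
  next
    case 2
    then have "real N * real p * phi t \<le> 1"
      using mult_phi_le_1[OF \<open>0 < real N * real p\<close>] by (simp add: L_def)
    then show ?thesis
      using minmax_density_le_Np_phi[of N p t] \<open>1 \<le> 2 * L * (sqrt (2 * L) + 1)\<close> by linarith
  next
    case 3
    then have "t < sqrt (2 * L)"
      using real_less_rsqrt by simp
    have "real N \<le> exp L"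
      using assms(1,2) \<open>0 < real N * real p\<close> by (simp add: L_def)
    with 3 have "minmax_density N p t \<le> 2 * L * (t + 1)"
      using assms(1,2) \<open>2 \<le> L\<close> by (intro minmax_density_le_of_nonneg) auto
    also have "\<dots> \<le> 2 * L * (sqrt (2 * L) + 1)"
      using \<open>t < sqrt (2 * L)\<close> \<open>2 \<le> L\<close> by (intro mult_left_mono) auto
    finally show ?thesis .
  qed
  then show ?thesis
    using two_mult_sqrt_plus_1_le_powr[OF \<open>2 \<le> L\<close>] by (simp add: L_def)
qed

lemma exp_minus_1_le_power:
  assumes "2 \<le> N"
  shows "exp (- 1) \<le> (1 - 1 / real N) ^ (N - 1)"
proof -
  define m where "m = real (N - 1)"
  have "1 \<le> m" and N_eq: "real N = m + 1"
    using assms by (simp_all add: m_def of_nat_diff)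
  have "(1 + 1 / m) ^ (N - 1) \<le> exp (1 / m) ^ (N - 1)"
    using \<open>1 \<le> m\<close> by (intro power_mono) (auto simp: add.commute)
  also have "\<dots> = exp 1"
    using \<open>1 \<le> m\<close> by (simp add: m_def flip: exp_of_nat_mult)
  finally have "(1 + 1 / m) ^ (N - 1) \<le> exp 1" .
  moreover have "0 < (1 + 1 / m) ^ (N - 1)"
    using \<open>1 \<le> m\<close> by (intro zero_less_power add_pos_pos) auto
  ultimately have "inverse (exp 1) \<le> inverse ((1 + 1 / m) ^ (N - 1))"
    by (rule le_imp_inverse_le)
  moreover have "1 - 1 / real N = inverse (1 + 1 / m)"
    using \<open>1 \<le> m\<close> by (simp add: N_eq field_simps)
  ultimately show ?thesis
    by (simp add: exp_minus power_inverse)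
qed

lemma ex_Phi_power_eq_inverse:
  assumes "2 \<le> N" and "real N \<le> 2 ^ p"
  obtains t where "0 \<le> t" "Phi t ^ p = 1 / real N"
proof -
  have "Phi 0 ^ p \<le> 1 / real N"
    using assms by (simp add: Phi_0 power_one_over field_simps)
  have "((\<lambda>t. Phi t ^ p) \<longlongrightarrow> 1 ^ p) at_top"
    by (intro tendsto_power tendsto_Phi_at_top)
  moreover have "1 / real N < 1 ^ p"
    using assms(1) by simp
  ultimately have "eventually (\<lambda>t. 1 / real N < Phi t ^ p) at_top"
    by (rule order_tendstoD(1))
  then obtain b where b: "\<And>t. b \<le> t \<Longrightarrow> 1 / real N < Phi t ^ p"
    by (auto simp: eventually_at_top_linorder)
  have "continuous_on {0..max b 0} (\<lambda>t. Phi t ^ p)"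
    by (intro continuous_intros continuous_on_subset[OF continuous_on_Phi]) auto
  then have "\<exists>t\<ge>0. t \<le> max b 0 \<and> Phi t ^ p = 1 / real N"
    using \<open>Phi 0 ^ p \<le> 1 / real N\<close> b[of "max b 0"] by (intro IVT') auto
  with that show ?thesis
    by blast
qed

lemma ln_bounds_at_Phi_quantile:
  assumes "1 \<le> N" "0 \<le> t" and quantile: "Phi t ^ p = 1 / real N"
  shows "real p * (1 - Phi t) \<le> ln (real N)" and "ln (real N) \<le> real p * ((1 - Phi t) / Phi t)"
proof -
  have "1 / 2 \<le> Phi t"
    using Phi_mono[OF \<open>0 \<le> t\<close>] by (simp add: Phi_0)
  have "- ln (real N) = ln (Phi t ^ p)"
    using quantile assms(1) by (simp add: ln_div)
  also have "\<dots> = real p * ln (Phi t)"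
    using \<open>1 / 2 \<le> Phi t\<close> by (simp add: ln_realpow)
  finally have ln_N: "ln (real N) = real p * - ln (Phi t)"
    by simp
  have "1 - Phi t \<le> - ln (Phi t)"
    using ln_le_minus_one[of "Phi t"] \<open>1 / 2 \<le> Phi t\<close> by simp
  then show "real p * (1 - Phi t) \<le> ln (real N)"
    unfolding ln_N by (rule mult_left_mono) simp
  have "- ln (Phi t) \<le> (1 - Phi t) / Phi t"
    using ln_le_minus_one[of "1 / Phi t"] \<open>1 / 2 \<le> Phi t\<close> by (simp add: ln_div diff_divide_distrib)
  then show "ln (real N) \<le> real p * ((1 - Phi t) / Phi t)"
    unfolding ln_N by (rule mult_left_mono) simp
qed

lemma minmax_density_at_quantile_ge:
  assumes "2 \<le> N" "1 \<le> p" and "0 \<le> t" and quantile: "Phi t ^ p = 1 / real N"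
  shows "t * ln (real N) / exp 1 \<le> minmax_density N p t"
proof -
  define F where "F = Phi t"
  have "1 / 2 \<le> F"
    using Phi_mono[OF \<open>0 \<le> t\<close>] by (simp add: F_def Phi_0)
  have "t * ln (real N) \<le> t * (real p * ((1 - F) / F))"
    using ln_bounds_at_Phi_quantile(2)[OF _ \<open>0 \<le> t\<close> quantile] assms(1) \<open>0 \<le> t\<close>
    by (intro mult_left_mono) (auto simp: F_def)
  also have "\<dots> = real p * (t * (1 - F)) / F"
    by simp
  also have "\<dots> \<le> real p * phi t / F"
    using Phi_tail_le[OF \<open>0 \<le> t\<close>] \<open>1 / 2 \<le> F\<close>
    by (intro divide_right_mono mult_left_mono) (auto simp: F_def)
  finally have "t * ln (real N) / exp 1 \<le> exp (- 1) * (real p * phi t / F)"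
    by (simp add: exp_minus field_simps)
  also have "\<dots> \<le> (1 - 1 / real N) ^ (N - 1) * (real p * phi t / F)"
    using exp_minus_1_le_power[OF assms(1)] \<open>1 / 2 \<le> F\<close> by (intro mult_right_mono) auto
  also have "\<dots> = minmax_density N p t"
  proof -
    define c where "c = (1 - 1 / real N) ^ (N - 1)"
    have "F ^ p = 1 / real N"
      using quantile by (simp add: F_def)
    moreover have "F ^ (p - 1) = 1 / (real N * F)"
      using quantile \<open>1 \<le> p\<close> \<open>1 / 2 \<le> F\<close> assms(1)
      by (cases p) (auto simp: F_def field_simps)
    ultimately have "minmax_density N p t = real N * c * (real p * (1 / (real N * F)) * phi t)"
      unfolding minmax_density_def c_def F_def by simp
    then show ?thesis
      unfolding c_def[symmetric] using assms(1) \<open>1 / 2 \<le> F\<close> by (simp add: field_simps)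
  qed
  finally show ?thesis .
qed

lemma phi_sqrt_2_ln:
  assumes "1 \<le> a"
  shows "phi (sqrt 2 * ln a powr (1/2)) = 1 / (sqrt (2 * pi) * a)"
  using assms
  by (simp add: std_normal_density_def powr_half_sqrt power_mult_distrib exp_minus field_simps)

lemma Phi_tail_le_phi_imp_ge_minus_2:
  assumes "0 \<le> t" and "1 - Phi t \<le> phi s"
  shows "s - 2 \<le> t"
proof (rule ccontr)
  assume "\<not> s - 2 \<le> t"
  define x where "x = s - 2"
  have "0 \<le> x" "t < x"
    using \<open>\<not> s - 2 \<le> t\<close> \<open>0 \<le> t\<close> by (auto simp: x_def)
  have "phi s * (x + 1) < phi s * exp (2 * s - 2)"
    using exp_ge_add_one_self[of "2 * s - 2"] \<open>0 \<le> x\<close> phi_pos[of s]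
    by (intro mult_strict_left_mono) (auto simp: x_def)
  also have "\<dots> = phi x"
    by (simp add: x_def std_normal_density_def power2_eq_square field_simps flip: exp_add)
  finally have "phi s < phi x / (x + 1)"
    using \<open>0 \<le> x\<close> by (simp add: field_simps)
  also have "\<dots> \<le> 1 - Phi x"
    using Phi_tail_ge[OF \<open>0 \<le> x\<close>] .
  also have "\<dots> \<le> 1 - Phi t"
    using Phi_mono[of t x] \<open>t < x\<close> by simp
  finally show False
    using assms(2) by simp
qed

lemma minmax_density_ge:
  assumes "1 \<le> N" "1 \<le> p"
    and "ln (real N * real p) < real p / sqrt (2 * pi)" and "2 \<le> ln (real N * real p)"
  shows "\<exists>t. (sqrt 2 * ln (real p / (sqrt (2 * pi) * ln (real N))) powr (1/2) - 2) * ln (real N) / exp 1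
    \<le> minmax_density N p t"
proof (cases "N = 1")
  case True
  then show ?thesis
    using minmax_density_nonneg by auto
next
  case False
  with assms(1) have "2 \<le> N"
    by simp
  define a where "a = real p / (sqrt (2 * pi) * ln (real N))"
  define s where "s = sqrt 2 * ln a powr (1/2)"
  have "0 < ln (real N)"
    using \<open>2 \<le> N\<close> by simp
  have "sqrt (2 * pi) * ln (real N) \<le> sqrt (2 * pi) * ln (real N * real p)"
    using assms(1,2) by (intro mult_left_mono) auto
  moreover have "sqrt (2 * pi) * ln (real N * real p) < real p"
    using assms(3) by (simp add: field_simps)
  ultimately have "sqrt (2 * pi) * ln (real N) < real p"
    by linarith
  then have "1 < a"
    unfolding a_def using \<open>0 < ln (real N)\<close> by (subst less_divide_eq_1_pos) auto
  then have "phi s = ln (real N) / real p"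
    using phi_sqrt_2_ln[of a] \<open>0 < ln (real N)\<close> by (simp add: s_def a_def)
  have "real N \<le> real N * real p"
    using assms(2) mult_left_mono[of 1 "real p" "real N"] by simp
  then have "real N \<le> 2 ^ p"
    using Np_le_two_power[OF assms(1-3)] by linarith
  then obtain t where "0 \<le> t" and quantile: "Phi t ^ p = 1 / real N"
    using ex_Phi_power_eq_inverse[OF \<open>2 \<le> N\<close>] by blast
  have "real p * (1 - Phi t) \<le> real p * phi s"
    using ln_bounds_at_Phi_quantile(1)[OF assms(1) \<open>0 \<le> t\<close> quantile] \<open>phi s = ln (real N) / real p\<close> assms(2)
    by simp
  then have "1 - Phi t \<le> phi s"
    using assms(2) by simp
  then have "(s - 2) * ln (real N) / exp 1 \<le> t * ln (real N) / exp 1"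
    using Phi_tail_le_phi_imp_ge_minus_2[OF \<open>0 \<le> t\<close>] \<open>2 \<le> N\<close>
    by (intro divide_right_mono mult_right_mono) auto
  also have "\<dots> \<le> minmax_density N p t"
    using minmax_density_at_quantile_ge[OF \<open>2 \<le> N\<close> assms(2) \<open>0 \<le> t\<close> quantile] .
  finally show ?thesis
    unfolding s_def a_def by blast
qed

theorem proposition5p1:
  fixes M :: "'a measure" and W :: "nat \<Rightarrow> nat \<Rightarrow> 'a \<Rightarrow> real"
    and N p :: nat and f :: "real \<Rightarrow> real"
  assumes "prob_space M"
    and "N \<ge> 1" and "p \<ge> 1"
    and "prob_space.indep_vars M (\<lambda>_. borel) (\<lambda>(k, j). W k j) ({1..N} \<times> {1..p})"
    and "\<And>k j. k \<in> {1..N} \<Longrightarrow> j \<in> {1..p} \<Longrightarrow>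
           distributed M lborel (W k j) std_normal_density"
    and "Z = (\<lambda>\<omega>. Min ((\<lambda>k. Max ((\<lambda>j. W k j \<omega>) ` {1..p})) ` {1..N}))"
    and "continuous_on UNIV f" and "\<And>t. f t \<ge> 0"
    and "distributed M lborel Z (\<lambda>t. ennreal (f t))"
    and "real p / sqrt (2 * pi) > ln (real N * real p)"
    and "ln (real N * real p) \<ge> 2"
  shows "(\<forall>t. f t \<le> 2 * (sqrt 2 + 2) * ln (real N * real p) powr (3/2))
    \<and> (\<exists>t. f t \<ge> (sqrt 2 * ln (real p / (sqrt (2 * pi) * ln (real N))) powr (1/2) - 2)
                     * ln (real N) / exp 1)"
proof -
  interpret prob_space M
    by fact
  have "density_cdf f t = 1 - (1 - Phi t ^ p) ^ N" for t
  proof -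
    have "prob {\<omega>\<in>space M. (\<lambda>(k, j). W k j) i \<omega> \<le> t} = Phi t" if "i \<in> {1..N} \<times> {1..p}" for i
      using that distributed_measure_le_eq_density_cdf[OF assms(5)] by (auto simp: Phi_def)
    from prob_Min_Max_le[OF assms(4) _ _ _ _ this] assms(2,3)
    have "prob {\<omega>\<in>space M. Z \<omega> \<le> t} = 1 - (1 - Phi t ^ p) ^ N"
      by (simp add: assms(6))
    then show ?thesis
      using distributed_measure_le_eq_density_cdf[OF assms(9,8)] by simp
  qed
  then have "density_cdf f = (\<lambda>t. 1 - (1 - Phi t ^ p) ^ N)"
    by blast
  then have "f t = minmax_density N p t" for t
    using has_real_derivative_density_cdf[OF assms(7) distributed_integrable_density[OF assms(9,8)]]
      has_real_derivative_minmax_cdf DERIV_unique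
    by metis
  then show ?thesis
    using minmax_density_le[OF assms(2,3,10,11)] minmax_density_ge[OF assms(2,3,10,11)] by auto
qed

end
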